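(* Let $d$ be a positive integer and $I$ a nonzero square free monomial ideal of $S=K[x_1,\ldots,x_n]$ generated in degrees $\geq d$ with $\rho_d(I)>0$. The following are equivalent: (1) $\operatorname{sdepth}_S I=d$; (2) there exist square free monomials of degree $d$ in $I$ which generate an ideal $I'$ with $\rho_d(I')>\rho_{d+1}(I')$.
   Context: $K$ is a field; for a monomial ideal $L$, $\rho_k(L)$ denotes the number of square free monomials of degree $k$ belonging to $L$. Stanley depth: let $P_{I}$ be the (finite) poset of all square free monomials in $I$, ordered by divisibility. For a partition $\mathcal P$ of $P_{I}$ into disjoint intervals $[u_i,v_i]=\{w\in P_{I}: u_i\mid w,\ w\mid v_i\}$, set $\operatorname{sdepth}\mathcal P=\min_i\deg v_i$; then $\operatorname{sdepth}_S I=\max_{\mathcal P}\operatorname{sdepth}\mathcal P$, the maximum over all such partitions. *)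

theory Defs
  imports Main
begin

text \<open>A square free monomial x_{i_1}...x_{i_k} of S = K[x_1,...,x_n] is encoded by its support,
  a subset of the variable index set {..<n}; its degree is the cardinality, and divisibility is
  inclusion. A square free monomial ideal is determined by the set of square free monomials it
  contains, an up-closed family of subsets of {..<n}.\<close>

definition sqf_monomials :: "nat \<Rightarrow> nat set set" where
  "sqf_monomials n = Pow {..<n}"

definition sqf_monomial_ideal :: "nat \<Rightarrow> nat set set \<Rightarrow> bool" where
  "sqf_monomial_ideal n P \<longleftrightarrow> P \<subseteq> sqf_monomials n \<and>
     (\<forall>u\<in>P. \<forall>v\<in>sqf_monomials n. u \<subseteq> v \<longrightarrow> v \<in> P)"

definition gen_ideal :: "nat \<Rightarrow> nat set set \<Rightarrow> nat set set" where
  "gen_ideal n G = {v \<in> sqf_monomials n. \<exists>g\<in>G. g \<subseteq> v}"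

definition rho :: "nat set set \<Rightarrow> nat \<Rightarrow> nat" where
  "rho P k = card {u \<in> P. card u = k}"

definition interval :: "nat set set \<Rightarrow> nat set \<Rightarrow> nat set \<Rightarrow> nat set set" where
  "interval P u v = {w \<in> P. u \<subseteq> w \<and> w \<subseteq> v}"

definition interval_partition :: "nat set set \<Rightarrow> (nat set \<times> nat set) set \<Rightarrow> bool" where
  "interval_partition P \<Pi> \<longleftrightarrow> finite \<Pi> \<and>
     (\<forall>(u,v)\<in>\<Pi>. u \<in> P \<and> v \<in> P \<and> u \<subseteq> v) \<and>
     (\<forall>p\<in>\<Pi>. \<forall>q\<in>\<Pi>. p \<noteq> q \<longrightarrow>
        interval P (fst p) (snd p) \<inter> interval P (fst q) (snd q) = {}) \<and>
     (\<Union>(u,v)\<in>\<Pi>. interval P u v) = P"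

definition sdepth_partition :: "(nat set \<times> nat set) set \<Rightarrow> nat" where
  "sdepth_partition \<Pi> = Min ((\<lambda>(u,v). card v) ` \<Pi>)"

definition sdepth :: "nat set set \<Rightarrow> nat" where
  "sdepth P = Max {sdepth_partition \<Pi> | \<Pi>. interval_partition P \<Pi>}"

end

theory Submission
  imports Defs
begin

text \<open>
  The partition of I into singleton intervals shows
  sdepth I \<ge> d, so sdepth I = d exactly when no interval partition has all its upper ends of
  degree \<ge> d + 1.  Such a partition exists iff every degree-d monomial u of I can be matched
  injectively to an upper cover of u in I (a monomial x_i u in I): a partition gives the matching
  by picking, inside the interval whose lower end is u, an upper cover of u; a matching gives the
  partition into the intervals [u, f u] together with singletons.  By Hall's marriage theorem the
  matching exists iff every set G of degree-d monomials has at least card G upper covers, and the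
  number of upper covers of G is exactly rho_{d+1} of the ideal generated by G, while
  rho_d of that ideal is card G.
\<close>

definition has_sdr :: "'a set \<Rightarrow> ('a \<Rightarrow> 'b set) \<Rightarrow> bool" where
  "has_sdr A N \<longleftrightarrow> (\<exists>f. inj_on f A \<and> (\<forall>a\<in>A. f a \<in> N a))"

definition hall_condition :: "'a set \<Rightarrow> ('a \<Rightarrow> 'b set) \<Rightarrow> bool" where
  "hall_condition A N \<longleftrightarrow> (\<forall>X\<subseteq>A. card X \<le> card (\<Union>(N ` X)))"

lemma sdr_imp_hall_condition:
  assumes "has_sdr A N" and "finite A" and "\<forall>a\<in>A. finite (N a)"
  shows "hall_condition A N"
  unfolding hall_condition_def
proof (intro allI impI)
  fix X assume X: "X \<subseteq> A"
  obtain f where f: "inj_on f A" "\<forall>a\<in>A. f a \<in> N a" using assms(1) by (auto simp: has_sdr_def)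
  have "card X = card (f ` X)" using f(1) X by (simp add: card_image inj_on_subset)
  also have "\<dots> \<le> card (\<Union>(N ` X))"
    using f(2) X assms(2,3) by (intro card_mono) (auto intro: finite_subset[of X A])
  finally show "card X \<le> card (\<Union>(N ` X))" .
qed

lemma sdr_combine:
  assumes "inj_on f X" "\<forall>a\<in>X. f a \<in> N a \<inter> M" "inj_on g Y" "\<forall>a\<in>Y. g a \<in> N a - M"
  shows "has_sdr (X \<union> Y) N"
proof -
  define h where "h a = (if a \<in> X then f a else g a)" for a
  have "inj_on h (X \<union> Y)"
    using assms unfolding inj_on_def h_def by (metis DiffE IntE UnE)
  moreover have "\<forall>a\<in>X \<union> Y. h a \<in> N a" using assms by (auto simp: h_def)
  ultimately show ?thesis by (auto simp: has_sdr_def)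
qed

lemma hall_condition_tight_remainder:
  assumes fin: "finite A" "\<forall>a\<in>A. finite (N a)" and hall: "hall_condition A N"
    and X: "X \<subseteq> A" "card (\<Union>(N ` X)) \<le> card X"
  shows "hall_condition (A - X) (\<lambda>a. N a - \<Union>(N ` X))"
  unfolding hall_condition_def
proof (intro allI impI)
  fix Y assume Y: "Y \<subseteq> A - X"
  define M where "M = \<Union>(N ` X)"
  have fin_X: "finite X" using X(1) fin(1) by (rule finite_subset)
  have fin_Y: "finite Y" using Y fin(1) by (meson Diff_subset finite_subset)
  have fin_M: "finite M" using fin_X X(1) fin(2) by (auto simp: M_def)
  have fin_rest: "finite (\<Union>a\<in>Y. N a - M)" using fin_Y Y fin(2) by auto
  have "card X \<le> card M" using hall X(1) unfolding hall_condition_def M_def by blast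
  then have card_M: "card M = card X" using X(2) by (simp add: M_def)
  have "Y \<union> X \<subseteq> A" using Y X(1) by blast
  have "card Y + card X = card (Y \<union> X)" using fin_Y fin_X Y by (subst card_Un_disjoint) auto
  also have "\<dots> \<le> card (\<Union>(N ` (Y \<union> X)))"
    using hall \<open>Y \<union> X \<subseteq> A\<close> unfolding hall_condition_def by blast
  also have "\<Union>(N ` (Y \<union> X)) = (\<Union>a\<in>Y. N a - M) \<union> M" by (auto simp: M_def)
  also have "card \<dots> = card (\<Union>a\<in>Y. N a - M) + card M"
    using fin_rest fin_M by (subst card_Un_disjoint) auto
  finally have "card Y \<le> card (\<Union>a\<in>Y. N a - M)" using card_M by simp
  then show "card Y \<le> card (\<Union>a\<in>Y. N a - \<Union>(N ` X))" by (simp only: M_def)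
qed

lemma hall_condition_slack_remainder:
  assumes fin: "finite A" "\<forall>a\<in>A. finite (N a)"
    and slack: "\<forall>X. X \<subseteq> A \<and> X \<noteq> {} \<and> X \<noteq> A \<longrightarrow> card X < card (\<Union>(N ` X))"
    and a: "a \<in> A"
  shows "hall_condition (A - {a}) (\<lambda>x. N x - {b})"
  unfolding hall_condition_def
proof (intro allI impI)
  fix Y assume Y: "Y \<subseteq> A - {a}"
  show "card Y \<le> card (\<Union>x\<in>Y. N x - {b})"
  proof (cases "Y = {}")
    case False
    have "card Y < card (\<Union>(N ` Y))" using slack Y False a by blast
    moreover have "finite (\<Union>(N ` Y))" using fin Y by (auto intro: finite_subset)
    moreover have "(\<Union>x\<in>Y. N x - {b}) = \<Union>(N ` Y) - {b}" by auto
    ultimately show ?thesis by (auto simp: card_Diff_singleton_if)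
  qed simp
qed

text \<open>Hall's marriage theorem for finite families of finite sets, by strong induction on the number
  of indices, splitting along a tight subfamily if one exists.\<close>
theorem hall_marriage:
  assumes "finite A" "\<forall>a\<in>A. finite (N a)" "hall_condition A N"
  shows "has_sdr A N"
  using assms
proof (induction "card A" arbitrary: A N rule: less_induct)
  case less
  note fin = less.prems(1,2) and hall = less.prems(3)
  have IH: "has_sdr B N'"
    if "B \<subseteq> A" "card B < card A" "\<forall>a\<in>B. N' a \<subseteq> N a" "hall_condition B N'" for B N'
  proof (rule less.hyps[OF that(2)])
    show "finite B" using that(1) fin(1) by (rule finite_subset)
    show "\<forall>a\<in>B. finite (N' a)" using that(1,3) fin(2) by (meson finite_subset subsetD)
  qed fact
  consider (empty) "A = {}"
    | (tight) X where "X \<subseteq> A" "X \<noteq> {}" "X \<noteq> A" "card (\<Union>(N ` X)) \<le> card X"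
    | (slack) a where "a \<in> A" "\<forall>X. X \<subseteq> A \<and> X \<noteq> {} \<and> X \<noteq> A \<longrightarrow> card X < card (\<Union>(N ` X))"
  proof (cases "\<exists>X. X \<subseteq> A \<and> X \<noteq> {} \<and> X \<noteq> A \<and> card (\<Union>(N ` X)) \<le> card X")
    case True
    then show ?thesis using that(2) by blast
  next
    case no_tight: False
    show ?thesis
    proof (cases "A = {}")
      case False
      then obtain a where "a \<in> A" by blast
      moreover have "\<forall>X. X \<subseteq> A \<and> X \<noteq> {} \<and> X \<noteq> A \<longrightarrow> card X < card (\<Union>(N ` X))"
        using no_tight by (auto simp: not_le)
      ultimately show ?thesis by (rule that(3))
    qed (rule that(1))
  qed
  then show ?case
  proof cases
    case empty
    then show ?thesis by (simp add: has_sdr_def)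
  next
    case tight
    text \<open>A tight subfamily X is matched on its own, the rest avoiding the neighbours of X.\<close>
    define M where "M = \<Union>(N ` X)"
    have "finite X" using tight(1) fin(1) by (rule finite_subset)
    have "card X < card A" using tight(1,3) fin(1) by (simp add: psubset_card_mono psubsetI)
    moreover have "hall_condition X N" using hall tight(1) by (auto simp: hall_condition_def)
    ultimately have "has_sdr X N" using tight(1) by (intro IH) auto
    then obtain f where f: "inj_on f X" "\<forall>a\<in>X. f a \<in> N a" by (auto simp: has_sdr_def)
    have "0 < card X" using \<open>finite X\<close> tight(2) by (simp add: card_gt_0_iff)
    then have "card (A - X) < card A"
      using card_mono[OF fin(1) tight(1)] \<open>finite X\<close> tight(1) by (simp add: card_Diff_subset)
    moreover have "hall_condition (A - X) (\<lambda>a. N a - M)"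
      unfolding M_def using fin hall tight(1,4) by (rule hall_condition_tight_remainder)
    ultimately have "has_sdr (A - X) (\<lambda>a. N a - M)" by (intro IH) auto
    then obtain g where g: "inj_on g (A - X)" "\<forall>a\<in>A - X. g a \<in> N a - M"
      by (auto simp: has_sdr_def)
    have "\<forall>a\<in>X. f a \<in> N a \<inter> M" using f(2) by (auto simp: M_def)
    from sdr_combine[OF f(1) this g] show ?thesis using tight(1) by (simp add: Un_absorb1)
  next
    case slack
    text \<open>With slack everywhere, a can take any neighbour b, which the others then avoid.\<close>
    have "{a} \<subseteq> A" using slack(1) by simp
    then have "card {a} \<le> card (\<Union>(N ` {a}))" using hall unfolding hall_condition_def by blast
    then have "N a \<noteq> {}" by auto
    then obtain b where b: "b \<in> N a" by blast
    have "card (A - {a}) < card A" using fin(1) slack(1) by (rule card_Diff1_less)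
    moreover have "hall_condition (A - {a}) (\<lambda>x. N x - {b})"
      using fin slack(2,1) by (rule hall_condition_slack_remainder)
    ultimately have "has_sdr (A - {a}) (\<lambda>x. N x - {b})" by (intro IH) auto
    then obtain g where g: "inj_on g (A - {a})" "\<forall>x\<in>A - {a}. g x \<in> N x - {b}"
      by (auto simp: has_sdr_def)
    have "inj_on (\<lambda>_. b) {a}" "\<forall>x\<in>{a}. b \<in> N x \<inter> {b}" using b by auto
    from sdr_combine[OF this g] show ?thesis using slack(1) by (simp add: insert_absorb)
  qed
qed

lemma interval_partition_covers:
  assumes "interval_partition P \<Pi>" "w \<in> P"
  obtains u v where "(u, v) \<in> \<Pi>" "w \<in> interval P u v"
  using assms unfolding interval_partition_def by blast

lemma interval_partition_unique_block:
  assumes "interval_partition P \<Pi>" "p \<in> \<Pi>" "q \<in> \<Pi>"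
    and "w \<in> interval P (fst p) (snd p)" "w \<in> interval P (fst q) (snd q)"
  shows "p = q"
  using assms unfolding interval_partition_def by blast

lemma interval_partition_by_owner:
  assumes "finite P"
    and endpoints: "\<And>w. w \<in> P \<Longrightarrow>
      fst (owner w) \<in> P \<and> snd (owner w) \<in> P \<and> w \<in> interval P (fst (owner w)) (snd (owner w))"
    and owned: "\<And>w w'. w \<in> P \<Longrightarrow> w' \<in> interval P (fst (owner w)) (snd (owner w)) \<Longrightarrow>
      owner w' = owner w"
  shows "interval_partition P (owner ` P)"
  unfolding interval_partition_def
proof (intro conjI ballI impI)
  show "finite (owner ` P)" using assms(1) by simp
  show "case p of (u, v) \<Rightarrow> u \<in> P \<and> v \<in> P \<and> u \<subseteq> v" if p: "p \<in> owner ` P" for p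
  proof -
    obtain w where "w \<in> P" "p = owner w" using p by blast
    then have "fst p \<in> P" "snd p \<in> P" "fst p \<subseteq> w" "w \<subseteq> snd p"
      using endpoints[of w] by (auto simp: interval_def)
    then show ?thesis by (cases p) (simp add: subset_trans[of _ w])
  qed
  show "interval P (fst p) (snd p) \<inter> interval P (fst q) (snd q) = {}"
    if pq: "p \<in> owner ` P" "q \<in> owner ` P" "p \<noteq> q" for p q
  proof -
    obtain w w' where "w \<in> P" "w' \<in> P" and owners: "p = owner w" "q = owner w'"
      using pq(1,2) by blast
    show ?thesis
    proof (rule equals0I)
      fix x assume "x \<in> interval P (fst p) (snd p) \<inter> interval P (fst q) (snd q)"
      then have "owner x = p" "owner x = q"
        using owned[OF \<open>w \<in> P\<close>, of x] owned[OF \<open>w' \<in> P\<close>, of x] owners by simp_all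
      then show False using pq(3) by simp
    qed
  qed
  show "(\<Union>(u, v)\<in>owner ` P. interval P u v) = P"
  proof
    show "(\<Union>(u, v)\<in>owner ` P. interval P u v) \<subseteq> P" by (auto simp: interval_def)
    show "P \<subseteq> (\<Union>(u, v)\<in>owner ` P. interval P u v)"
    proof
      fix w assume "w \<in> P"
      then have "w \<in> interval P (fst (owner w)) (snd (owner w))" using endpoints by blast
      then show "w \<in> (\<Union>(u, v)\<in>owner ` P. interval P u v)"
        using \<open>w \<in> P\<close> by (intro UN_I[of "owner w"]) (auto simp: case_prod_beta)
    qed
  qed
qed

lemma interval_partition_singletons:
  assumes "finite P"
  shows "interval_partition P ((\<lambda>u. (u, u)) ` P)"
  using assms by (rule interval_partition_by_owner) (auto simp: interval_def)

lemma sdepth_ge_iff: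
  assumes "finite P" "P \<noteq> {}"
  shows "k \<le> sdepth P \<longleftrightarrow> (\<exists>\<Pi>. interval_partition P \<Pi> \<and> (\<forall>(u, v)\<in>\<Pi>. k \<le> card v))"
proof -
  define S where "S = {sdepth_partition \<Pi> | \<Pi>. interval_partition P \<Pi>}"
  have "S \<subseteq> sdepth_partition ` Pow (P \<times> P)"
    unfolding S_def interval_partition_def by fastforce
  then have "finite S" using assms(1) by (meson finite_Pow_iff finite_SigmaI finite_imageI finite_subset)
  moreover have "S \<noteq> {}" using interval_partition_singletons[OF assms(1)] by (auto simp: S_def)
  ultimately have "k \<le> sdepth P \<longleftrightarrow> (\<exists>\<Pi>. interval_partition P \<Pi> \<and> k \<le> sdepth_partition \<Pi>)"
    unfolding sdepth_def S_def[symmetric] by (auto simp: Max_ge_iff S_def)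
  also have "\<dots> \<longleftrightarrow> (\<exists>\<Pi>. interval_partition P \<Pi> \<and> (\<forall>(u, v)\<in>\<Pi>. k \<le> card v))"
  proof -
    have "k \<le> sdepth_partition \<Pi> \<longleftrightarrow> (\<forall>(u, v)\<in>\<Pi>. k \<le> card v)" if "interval_partition P \<Pi>" for \<Pi>
    proof -
      have "finite \<Pi>" "\<Pi> \<noteq> {}" using that assms(2) by (auto simp: interval_partition_def)
      then show ?thesis unfolding sdepth_partition_def by (auto simp: Min_ge_iff)
    qed
    then show ?thesis by blast
  qed
  finally show ?thesis .
qed

definition upper_covers :: "nat set set \<Rightarrow> nat set \<Rightarrow> nat set set" where
  "upper_covers P u = {w \<in> P. u \<subseteq> w \<and> card w = Suc (card u)}"

context
  fixes n d :: nat and I :: "nat set set"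
  assumes ideal: "sqf_monomial_ideal n I" and min_deg: "\<forall>u\<in>I. d \<le> card u"
begin

lemma ideal_subset: "I \<subseteq> Pow {..<n}"
  using ideal by (auto simp: sqf_monomial_ideal_def sqf_monomials_def)

lemma finite_ideal: "finite I"
  using ideal_subset by (rule finite_subset) simp

lemma finite_member: "u \<in> I \<Longrightarrow> finite u"
  using ideal_subset by (auto intro: finite_subset)

lemma ideal_upward_closed: "u \<in> I \<Longrightarrow> u \<subseteq> v \<Longrightarrow> v \<subseteq> {..<n} \<Longrightarrow> v \<in> I"
  using ideal by (auto simp: sqf_monomial_ideal_def sqf_monomials_def)

lemma min_degree_minimal: "a \<in> I \<Longrightarrow> u \<in> I \<Longrightarrow> a \<subseteq> u \<Longrightarrow> card u = d \<Longrightarrow> a = u"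
  using min_deg finite_member by (metis card_seteq)

lemma gen_ideal_eq:
  assumes "G \<subseteq> I"
  shows "gen_ideal n G = {v \<in> I. \<exists>g\<in>G. g \<subseteq> v}"
  using assms ideal_subset ideal_upward_closed by (auto simp: gen_ideal_def sqf_monomials_def)

lemma rho_gen_ideal_min_degree:
  assumes "G \<subseteq> {u \<in> I. card u = d}"
  shows "rho (gen_ideal n G) d = card G"
proof -
  have "{v \<in> gen_ideal n G. card v = d} = G"
    using assms min_degree_minimal by (auto simp: gen_ideal_eq[of G] subset_iff)
  then show ?thesis by (simp add: rho_def)
qed

lemma rho_gen_ideal_next_degree:
  assumes "G \<subseteq> {u \<in> I. card u = d}"
  shows "rho (gen_ideal n G) (d + 1) = card (\<Union>(upper_covers I ` G))"
proof -
  have "{v \<in> gen_ideal n G. card v = d + 1} = \<Union>(upper_covers I ` G)"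
    using assms by (auto simp: gen_ideal_eq[of G] upper_covers_def subset_iff)
  then show ?thesis by (simp add: rho_def)
qed

lemma block_has_upper_cover:
  assumes part: "interval_partition I \<Pi>" and tops: "\<forall>(u, v)\<in>\<Pi>. d + 1 \<le> card v"
    and u: "u \<in> I" "card u = d"
  shows "\<exists>p\<in>\<Pi>. fst p = u \<and> (\<exists>w\<in>upper_covers I u. w \<in> interval I u (snd p))"
proof -
  obtain a b where ab: "(a, b) \<in> \<Pi>" "u \<in> interval I a b" using part u(1) by (rule interval_partition_covers)
  have "a \<in> I" "b \<in> I" using part ab(1) by (auto simp: interval_partition_def)
  have "a \<subseteq> u" "u \<subseteq> b" using ab(2) by (auto simp: interval_def)
  have "a = u" using min_degree_minimal \<open>a \<in> I\<close> u \<open>a \<subseteq> u\<close> by blast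
  have "d + 1 \<le> card b" using tops ab(1) by auto
  have "\<not> b \<subseteq> u"
  proof
    assume "b \<subseteq> u"
    then have "card b \<le> card u" by (rule card_mono[OF finite_member[OF u(1)]])
    then show False using \<open>d + 1 \<le> card b\<close> u(2) by simp
  qed
  then obtain x where x: "x \<in> b" "x \<notin> u" by blast
  have "insert x u \<subseteq> {..<n}" using x \<open>u \<subseteq> b\<close> \<open>b \<in> I\<close> ideal_subset by auto
  then have "insert x u \<in> upper_covers I u"
    using ideal_upward_closed[OF u(1)] x(2) finite_member[OF u(1)] by (auto simp: upper_covers_def)
  moreover have "insert x u \<in> interval I u b"
    using calculation x(1) \<open>u \<subseteq> b\<close> by (auto simp: upper_covers_def interval_def)
  ultimately show ?thesis using ab(1) \<open>a = u\<close> by (intro bexI[of _ "(a, b)"]) auto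
qed

text \<open>Such a partition matches the degree-d monomials injectively to upper covers, since distinct
  monomials lie in distinct blocks.\<close>
lemma partition_gives_sdr:
  assumes part: "interval_partition I \<Pi>" and tops: "\<forall>(u, v)\<in>\<Pi>. d + 1 \<le> card v"
  shows "has_sdr {u \<in> I. card u = d} (upper_covers I)"
proof -
  define cover where "cover u =
    (SOME w. \<exists>p\<in>\<Pi>. fst p = u \<and> w \<in> upper_covers I u \<and> w \<in> interval I u (snd p))" for u
  have cover: "\<exists>p\<in>\<Pi>. fst p = u \<and> cover u \<in> upper_covers I u \<and> cover u \<in> interval I u (snd p)"
    if u: "u \<in> I" "card u = d" for u
  proof -
    obtain p w where "p \<in> \<Pi>" "fst p = u" "w \<in> upper_covers I u" "w \<in> interval I u (snd p)"
      using block_has_upper_cover[OF part tops u] by blast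
    then have "\<exists>p\<in>\<Pi>. fst p = u \<and> w \<in> upper_covers I u \<and> w \<in> interval I u (snd p)" by blast
    then show ?thesis unfolding cover_def by (rule someI)
  qed
  have "inj_on cover {u \<in> I. card u = d}"
  proof (rule inj_onI)
    fix u u' assume u: "u \<in> {u \<in> I. card u = d}" and u': "u' \<in> {u \<in> I. card u = d}"
      and same: "cover u = cover u'"
    obtain p where p: "p \<in> \<Pi>" "fst p = u" "cover u \<in> interval I (fst p) (snd p)"
      using cover[of u] u by auto
    obtain q where q: "q \<in> \<Pi>" "fst q = u'" "cover u \<in> interval I (fst q) (snd q)"
      using cover[of u'] u' same by auto
    have "p = q" using interval_partition_unique_block[OF part p(1) q(1) p(3) q(3)] .
    then show "u = u'" using p(2) q(2) by simp
  qed
  then show ?thesis using cover by (auto simp: has_sdr_def)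
qed

text \<open>Conversely a matching f yields the partition into the intervals [u, f u] and the singletons of
  the unmatched monomials of degree above d.\<close>
lemma sdr_gives_partition:
  assumes inj: "inj_on f {u \<in> I. card u = d}"
    and covers: "\<forall>u\<in>{u \<in> I. card u = d}. f u \<in> upper_covers I u"
  shows "\<exists>\<Pi>. interval_partition I \<Pi> \<and> (\<forall>(u, v)\<in>\<Pi>. d + 1 \<le> card v)"
proof -
  define D where "D = {u \<in> I. card u = d}"
  define owner where "owner w =
    (if w \<in> D then (w, f w) else if w \<in> f ` D then (the_inv_into D f w, w) else (w, w))" for w
  have f: "f u \<in> I" "u \<subseteq> f u" "card (f u) = d + 1" if "u \<in> D" for u
    using covers that by (auto simp: D_def upper_covers_def)
  have f_notin: "f u \<notin> D" if "u \<in> D" for u using f(3)[OF that] by (simp add: D_def)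
  have owner_low: "owner u = (u, f u)" and owner_high: "owner (f u) = (u, f u)" if "u \<in> D" for u
    using that f_notin inj by (auto simp: owner_def D_def the_inv_into_f_f)
  have owner_rest: "owner w = (w, w)" if "w \<notin> D" "w \<notin> f ` D" for w
    using that by (simp add: owner_def)
  text \<open>A matched pair spans a two-element interval, since nothing lies strictly between the degrees.\<close>
  have pair_interval: "interval I u (f u) = {u, f u}" if "u \<in> D" for u
  proof (intro equalityI subsetI)
    fix w assume "w \<in> interval I u (f u)"
    then have "w \<in> I" "u \<subseteq> w" "w \<subseteq> f u" by (auto simp: interval_def)
    show "w \<in> {u, f u}"
    proof (cases "w = f u")
      case False
      then have "card w < card (f u)"
        using \<open>w \<subseteq> f u\<close> finite_member[OF f(1)[OF that]] by (simp add: psubset_card_mono psubsetI)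
      then have "card w = d" using min_deg \<open>w \<in> I\<close> f(3)[OF that] by force
      then show ?thesis using min_degree_minimal that \<open>w \<in> I\<close> \<open>u \<subseteq> w\<close> by (auto simp: D_def)
    qed simp
  qed (use f[OF that] that in \<open>auto simp: interval_def D_def\<close>)
  have singleton_interval: "interval I w w = {w}" if "w \<in> I" for w
    using that by (auto simp: interval_def)
  have block: "\<exists>u v. owner w = (u, v) \<and> interval I u v = {u, v} \<and> u \<in> I \<and> v \<in> I \<and> w \<in> {u, v}
      \<and> owner u = (u, v) \<and> owner v = (u, v) \<and> d + 1 \<le> card v" if "w \<in> I" for w
  proof -
    consider (low) "w \<in> D" | (high) u where "u \<in> D" "w = f u" | (rest) "w \<notin> D" "w \<notin> f ` D"
      by blast
    then show ?thesis
    proof cases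
      case low
      then show ?thesis using f[OF low] owner_low owner_high pair_interval by (auto simp: D_def)
    next
      case (high u)
      then show ?thesis using f[OF high(1)] owner_low owner_high pair_interval by (auto simp: D_def)
    next
      case rest
      then have "d + 1 \<le> card w" using min_deg \<open>w \<in> I\<close> by (force simp: D_def)
      then show ?thesis using rest owner_rest \<open>w \<in> I\<close> singleton_interval by auto
    qed
  qed
  have "interval_partition I (owner ` I)"
    using finite_ideal
  proof (rule interval_partition_by_owner)
    fix w assume "w \<in> I"
    then show "fst (owner w) \<in> I \<and> snd (owner w) \<in> I \<and> w \<in> interval I (fst (owner w)) (snd (owner w))"
      using block by fastforce
  next
    fix w w' assume "w \<in> I" "w' \<in> interval I (fst (owner w)) (snd (owner w))"
    then show "owner w' = owner w" using block by fastforce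
  qed
  moreover have "\<forall>(u, v)\<in>owner ` I. d + 1 \<le> card v" using block by fastforce
  ultimately show ?thesis by blast
qed

lemma sdepth_gt_min_degree_iff_hall:
  assumes "I \<noteq> {}"
  shows "d + 1 \<le> sdepth I \<longleftrightarrow> hall_condition {u \<in> I. card u = d} (upper_covers I)"
proof
  assume "d + 1 \<le> sdepth I"
  then obtain \<Pi> where "interval_partition I \<Pi>" "\<forall>(u, v)\<in>\<Pi>. d + 1 \<le> card v"
    using sdepth_ge_iff[OF finite_ideal assms] by blast
  then have "has_sdr {u \<in> I. card u = d} (upper_covers I)" by (rule partition_gives_sdr)
  then show "hall_condition {u \<in> I. card u = d} (upper_covers I)"
    using finite_ideal by (intro sdr_imp_hall_condition) (auto simp: upper_covers_def)
next
  assume "hall_condition {u \<in> I. card u = d} (upper_covers I)"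
  then have "has_sdr {u \<in> I. card u = d} (upper_covers I)"
    using finite_ideal by (intro hall_marriage) (auto simp: upper_covers_def)
  then obtain f where "inj_on f {u \<in> I. card u = d}" "\<forall>u\<in>{u \<in> I. card u = d}. f u \<in> upper_covers I u"
    by (auto simp: has_sdr_def)
  then show "d + 1 \<le> sdepth I"
    using sdr_gives_partition sdepth_ge_iff[OF finite_ideal assms] by blast
qed

lemma min_degree_le_sdepth:
  assumes "I \<noteq> {}"
  shows "d \<le> sdepth I"
  using sdepth_ge_iff[OF finite_ideal assms] interval_partition_singletons[OF finite_ideal] min_deg
  by auto

end

theorem corollary4p2:
  fixes n d :: nat and I :: "nat set set"
  assumes "0 < d"
    and "sqf_monomial_ideal n I"
    and "I \<noteq> {}"
    and "\<forall>u\<in>I. d \<le> card u"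
    and "rho I d > 0"
  shows "sdepth I = d \<longleftrightarrow>
    (\<exists>G. G \<subseteq> {u \<in> I. card u = d} \<and>
         rho (gen_ideal n G) d > rho (gen_ideal n G) (d + 1))"
proof -
  note ideal = assms(2,4)
  have "sdepth I = d \<longleftrightarrow> \<not> d + 1 \<le> sdepth I"
    using min_degree_le_sdepth[OF ideal assms(3)] by auto
  also have "\<dots> \<longleftrightarrow> \<not> hall_condition {u \<in> I. card u = d} (upper_covers I)"
    using sdepth_gt_min_degree_iff_hall[OF ideal assms(3)] by simp
  also have "\<dots> \<longleftrightarrow> (\<exists>G. G \<subseteq> {u \<in> I. card u = d} \<and> card (\<Union>(upper_covers I ` G)) < card G)"
    by (auto simp: hall_condition_def not_le)
  also have "\<dots> \<longleftrightarrow> (\<exists>G. G \<subseteq> {u \<in> I. card u = d} \<and>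
      rho (gen_ideal n G) d > rho (gen_ideal n G) (d + 1))"
    using rho_gen_ideal_min_degree[OF ideal] rho_gen_ideal_next_degree[OF ideal] by (metis (no_types))
  finally show ?thesis .
qed

end
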